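(* Let $\mathcal{H}$ be a complex Hilbert space and $B,C\in\mathcal{B}(\mathcal{H})$. Then $$w^2\left(\begin{bmatrix}0 & B\\ C & 0\end{bmatrix}\right)\ge \frac{1}{4\sqrt2}\Big[\|B+C^*\|^4+\|B-C^*\|^4\Big]^{1/2}\ge \frac14\max\left\{\big\||B|^2+|C^*|^2\big\|,\ \big\||B^*|^2+|C|^2\big\|\right\}.$$
   Context: $\mathcal{B}(\mathcal{H})$ is the algebra of bounded linear operators on $\mathcal{H}$ with operator norm $\|\cdot\|$. For $A\in\mathcal{B}(\mathcal{H})$, $A^*$ is the adjoint, $|A|=(A^*A)^{1/2}$, $|A^*|=(AA^* )^{1/2}$, and $w(A)=\sup_{\|x\|=1}|\langle Ax,x\rangle|$ is the numerical radius. The operator matrix $\begin{bmatrix}A&B\\C&D\end{bmatrix}$ acts on $\mathcal{H}\oplus\mathcal{H}$ by $(x_1,x_2)\mapsto(Ax_1+Bx_2,\,Cx_1+Dx_2)$; $0$ denotes the zero operator. *)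

theory Defs
  imports "HOL-Analysis.Analysis"
begin

text \<open>The library has only real inner product spaces,
so we introduce a class of complex inner product spaces which are complete
(Banach) in the norm induced by the inner product. The inner product is
linear in the first argument and conjugate linear in the second, matching
the paper's notation.\<close>

class complex_hilbert = banach +
  fixes scaleC :: "complex \<Rightarrow> 'a \<Rightarrow> 'a"
    and cinner :: "'a \<Rightarrow> 'a \<Rightarrow> complex"
  assumes scaleC_add_right: "scaleC a (x + y) = scaleC a x + scaleC a y"
    and scaleC_add_left: "scaleC (a + b) x = scaleC a x + scaleC b x"
    and scaleC_scaleC: "scaleC a (scaleC b x) = scaleC (a * b) x"
    and scaleC_one: "scaleC 1 x = x"
    and scaleR_scaleC: "scaleR r x = scaleC (complex_of_real r) x"
    and cinner_commute: "cinner x y = cnj (cinner y x)"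
    and cinner_add_left: "cinner (x + y) z = cinner x z + cinner y z"
    and cinner_scaleC_left: "cinner (scaleC a x) y = a * cinner x y"
    and cinner_self_real: "Im (cinner x x) = 0"
    and cinner_self_nonneg: "0 \<le> Re (cinner x x)"
    and cinner_self_eq_0: "cinner x x = 0 \<longleftrightarrow> x = 0"
    and norm_eq_sqrt_cinner: "norm x = sqrt (Re (cinner x x))"

definition bounded_op :: "('a::complex_hilbert \<Rightarrow> 'a) \<Rightarrow> bool" where
  "bounded_op A \<longleftrightarrow>
     (\<forall>x y. A (x + y) = A x + A y) \<and> (\<forall>a x. A (scaleC a x) = scaleC a (A x)) \<and>
     (\<exists>K. \<forall>x. norm (A x) \<le> norm x * K)"

definition adj :: "('a::complex_hilbert \<Rightarrow> 'a) \<Rightarrow> 'a \<Rightarrow> 'a" where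
  "adj A = (SOME B. \<forall>x y. cinner (A x) y = cinner x (B y))"

text \<open>Operator norm is the library's \<open>onorm\<close>.\<close>

text \<open>The Hilbert direct sum \<open>H \<oplus> H\<close>, modelled on pairs, with its inner product and norm.\<close>
definition inner2 :: "'a::complex_hilbert \<times> 'a \<Rightarrow> 'a \<times> 'a \<Rightarrow> complex" where
  "inner2 x y = cinner (fst x) (fst y) + cinner (snd x) (snd y)"

definition norm2 :: "'a::complex_hilbert \<times> 'a \<Rightarrow> real" where
  "norm2 x = sqrt (norm (fst x) ^ 2 + norm (snd x) ^ 2)"

definition opmatrix :: "('a::plus \<Rightarrow> 'a) \<Rightarrow> ('a \<Rightarrow> 'a) \<Rightarrow> ('a \<Rightarrow> 'a) \<Rightarrow> ('a \<Rightarrow> 'a)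
    \<Rightarrow> 'a \<times> 'a \<Rightarrow> 'a \<times> 'a" where
  "opmatrix A B C D = (\<lambda>(x1, x2). (A x1 + B x2, C x1 + D x2))"

definition numrad2 :: "('a::complex_hilbert \<times> 'a \<Rightarrow> 'a \<times> 'a) \<Rightarrow> real" where
  "numrad2 T = (SUP x\<in>{x. norm2 x = 1}. cmod (inner2 (T x) x))"

end

(*
  Write X' for the adjoint of X, and put T = [[0, B], [C, 0]], S = B + C' and R = B - C'.
  The quadratic form of T is <T(u,v), (u,v)> = <Bv, u> + conj <C'v, u>, so its real part
  is Re <Sv, u> and its imaginary part is Im <Rv, u>. Testing the form on the unit vectors
  (Sv / (sqrt 2 |Sv|), v / (sqrt 2 |v|)) gives |S|, |R| <= 2 w(T), hence
  |S|^4 + |R|^4 <= 32 w(T)^4. For the second inequality, 2 (B'B + CC') = S'S + R'R and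
  2 (BB' + C'C) = SS' + RR', so both norms are at most (|S|^2 + |R|^2) / 2, which is
  bounded by sqrt 2 (|S|^4 + |R|^4)^(1/2) / 2.
  Adjoints exist by the Riesz representation theorem, obtained from the projection
  onto the (closed) kernel of a bounded functional.
*)

theory Submission
  imports Defs
begin

section \<open>Complex inner product spaces\<close>

lemma cinner_zero_left [simp]: "cinner 0 (y::'a::complex_hilbert) = 0"
  using cinner_add_left[of "0::'a" 0 y] by simp

lemma cinner_diff_left: "cinner (x - z) (y::'a::complex_hilbert) = cinner x y - cinner z y"
  using cinner_add_left[of "x - z" z y] by simp

lemma cinner_add_right: "cinner x (y + z::'a::complex_hilbert) = cinner x y + cinner x z"
  by (metis cinner_commute cinner_add_left complex_cnj_add)

lemma cinner_zero_right [simp]: "cinner (x::'a::complex_hilbert) 0 = 0"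
  by (metis cinner_commute cinner_zero_left complex_cnj_zero)

lemma cinner_diff_right: "cinner x (y - z::'a::complex_hilbert) = cinner x y - cinner x z"
  by (metis cinner_commute cinner_diff_left complex_cnj_diff)

lemma cinner_scaleC_right: "cinner x (scaleC a (y::'a::complex_hilbert)) = cnj a * cinner x y"
  by (metis cinner_commute cinner_scaleC_left complex_cnj_mult)

lemma cinner_scaleR_left: "cinner (scaleR r x) (y::'a::complex_hilbert) = of_real r * cinner x y"
  by (simp add: scaleR_scaleC cinner_scaleC_left)

lemma cinner_scaleR_right: "cinner x (scaleR r (y::'a::complex_hilbert)) = of_real r * cinner x y"
  by (simp add: scaleR_scaleC cinner_scaleC_right)

lemma cinner_self_eq_norm_sq: "cinner x (x::'a::complex_hilbert) = of_real (norm x ^ 2)"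
proof -
  have "Re (cinner x x) = norm x ^ 2"
    using norm_eq_sqrt_cinner[of x] cinner_self_nonneg[of x] by simp
  then show ?thesis
    using cinner_self_real[of x] by (simp add: complex_eq_iff)
qed

lemma scaleC_zero_left [simp]: "scaleC 0 (x::'a::complex_hilbert) = 0"
  using scaleR_scaleC[of 0 x] by simp

lemma norm_scaleC: "norm (scaleC a (x::'a::complex_hilbert)) = cmod a * norm x"
proof -
  have "cinner (scaleC a x) (scaleC a x) = (a * cnj a) * cinner x x"
    by (simp add: cinner_scaleC_left cinner_scaleC_right mult.assoc)
  also have "\<dots> = of_real ((cmod a * norm x) ^ 2)"
    by (simp only: complex_norm_square[symmetric] cinner_self_eq_norm_sq of_real_mult power_mult_distrib)
  finally have "norm (scaleC a x) ^ 2 = (cmod a * norm x) ^ 2"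
    by (simp only: cinner_self_eq_norm_sq of_real_eq_iff)
  then show ?thesis
    by (simp add: power2_eq_iff_nonneg)
qed

lemma cinner_right_ext:
  assumes "\<And>x. cinner x u = cinner x (v::'a::complex_hilbert)"
  shows "u = v"
proof -
  have "cinner (u - v) (u - v) = 0"
    using assms[of "u - v"] by (simp add: cinner_diff_right)
  then show ?thesis
    by (simp add: cinner_self_eq_0)
qed

lemma norm_diff_projection_sq:
  fixes x y :: "'a::complex_hilbert"
  assumes "y \<noteq> 0"
  shows "norm (x - scaleC (cinner x y / of_real (norm y ^ 2)) y) ^ 2
         = norm x ^ 2 - (cmod (cinner x y)) ^ 2 / norm y ^ 2"
proof -
  define c where "c = cinner x y"
  define n where "n = norm y ^ 2"
  have "n > 0"
    using assms by (simp add: n_def)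
  have cxx: "cinner x x = of_real (norm x ^ 2)" and cyy: "cinner y y = of_real n"
    and cyx: "cinner y x = cnj c"
    by (simp_all add: cinner_self_eq_norm_sq n_def c_def cinner_commute[of y x])
  have "of_real (norm (x - scaleC (c / of_real n) y) ^ 2)
      = cinner (x - scaleC (c / of_real n) y) (x - scaleC (c / of_real n) y)"
    by (simp add: cinner_self_eq_norm_sq)
  also have "\<dots> = of_real (norm x ^ 2) - cnj (c / of_real n) * c - (c / of_real n) * cnj c
                  + (c / of_real n) * cnj (c / of_real n) * of_real n"
    by (simp add: cinner_diff_left cinner_diff_right cinner_scaleC_left cinner_scaleC_right
        cxx cyy cyx c_def[symmetric] algebra_simps)
  also have "\<dots> = of_real (norm x ^ 2) - (c * cnj c) / of_real n"
    using \<open>n > 0\<close> by (simp add: field_simps)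
  also have "\<dots> = of_real (norm x ^ 2 - (cmod c) ^ 2 / n)"
    by (simp only: complex_norm_square of_real_diff of_real_divide)
  finally show ?thesis
    unfolding c_def n_def of_real_eq_iff .
qed

lemma cmod_cinner_le: "cmod (cinner x y) \<le> norm x * norm (y::'a::complex_hilbert)"
proof (cases "y = 0")
  case False
  from norm_diff_projection_sq[OF False, of x]
  have "(cmod (cinner x y)) ^ 2 / norm y ^ 2 \<le> norm x ^ 2"
    by (metis diff_ge_0_iff_ge zero_le_power2)
  then have "(cmod (cinner x y)) ^ 2 \<le> (norm x * norm y) ^ 2"
    using False by (simp add: field_simps power_mult_distrib)
  then show ?thesis
    by (simp add: power2_le_iff_abs_le)
qed simp

lemma parallelogram_law:
  "norm (a + b) ^ 2 + norm (a - b) ^ 2 = 2 * norm a ^ 2 + 2 * norm (b::'a::complex_hilbert) ^ 2"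
proof -
  have "(of_real (norm (a + b) ^ 2 + norm (a - b) ^ 2) :: complex)
      = cinner (a + b) (a + b) + cinner (a - b) (a - b)"
    by (simp add: cinner_self_eq_norm_sq)
  also have "\<dots> = 2 * cinner a a + 2 * cinner b b"
    by (simp add: cinner_add_left cinner_add_right cinner_diff_left cinner_diff_right)
  also have "\<dots> = of_real (2 * norm a ^ 2 + 2 * norm b ^ 2)"
    by (simp add: cinner_self_eq_norm_sq)
  finally show ?thesis
    by (simp only: of_real_eq_iff)
qed

section \<open>Projection and Riesz representation\<close>

lemma Cauchy_minimizing_sequence:
  fixes M :: "'a::complex_hilbert set"
  assumes midpoint: "\<And>m m'. m \<in> M \<Longrightarrow> m' \<in> M \<Longrightarrow> scaleR (1/2) (m + m') \<in> M"
    and ms: "\<And>n. ms n \<in> M"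
    and d_le: "\<And>m. m \<in> M \<Longrightarrow> d \<le> norm (x - m)"
    and lim: "(\<lambda>n. norm (x - ms n)) \<longlonglongrightarrow> d"
  shows "Cauchy ms"
proof (rule CauchyI)
  define t where "t n = norm (x - ms n) ^ 2 - d ^ 2" for n
  have "0 \<le> d"
    using lim by (rule LIMSEQ_le_const) simp
  \<comment> \<open>parallelogram law for \<open>x - ms n\<close> and \<open>x - ms k\<close>, whose midpoint is no closer to \<open>x\<close> than \<open>d\<close>\<close>
  have dist_sq: "norm (ms n - ms k) ^ 2 \<le> 2 * t n + 2 * t k" for n k
  proof -
    have "(x - ms n) + (x - ms k) = scaleR 2 (x - scaleR (1/2) (ms n + ms k))"
      by (simp add: algebra_simps scaleR_2)
    then have "norm ((x - ms n) + (x - ms k)) ^ 2 \<ge> 4 * d ^ 2"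
      using d_le[OF midpoint[OF ms ms]] \<open>0 \<le> d\<close> by (simp add: power_mult_distrib power_mono)
    moreover have "norm ((x - ms n) - (x - ms k)) = norm (ms n - ms k)"
      by (simp add: norm_minus_commute)
    ultimately show ?thesis
      using parallelogram_law[of "x - ms n" "x - ms k"] by (simp add: t_def)
  qed
  have "t \<longlonglongrightarrow> 0"
    unfolding t_def using tendsto_diff[OF tendsto_power[OF lim, of 2] tendsto_const[of "d ^ 2"]] by simp
  fix e :: real
  assume "0 < e"
  then obtain N where N: "\<And>n. n \<ge> N \<Longrightarrow> t n < e ^ 2 / 4"
    using order_tendstoD(2)[OF \<open>t \<longlonglongrightarrow> 0\<close>, of "e ^ 2 / 4"] by (auto simp: eventually_sequentially)
  have "norm (ms m - ms n) < e" if "m \<ge> N" "n \<ge> N" for m n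
  proof -
    have "norm (ms m - ms n) ^ 2 < e ^ 2"
      using dist_sq[of m n] N[OF that(1)] N[OF that(2)] by linarith
    then show ?thesis
      using \<open>0 < e\<close> by (simp add: power_less_imp_less_base)
  qed
  then show "\<exists>N. \<forall>m\<ge>N. \<forall>n\<ge>N. norm (ms m - ms n) < e"
    by blast
qed

lemma exists_nearest_point:
  fixes M :: "'a::complex_hilbert set"
  assumes "closed M" "M \<noteq> {}"
    and midpoint: "\<And>m m'. m \<in> M \<Longrightarrow> m' \<in> M \<Longrightarrow> scaleR (1/2) (m + m') \<in> M"
  shows "\<exists>m\<in>M. \<forall>m'\<in>M. norm (x - m) \<le> norm (x - m')"
proof -
  define d where "d = infdist x M"
  have d_le: "d \<le> norm (x - m)" if "m \<in> M" for m
    using infdist_le[OF that, of x] by (simp add: d_def dist_norm)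
  have "d \<in> closure ((\<lambda>m. norm (x - m)) ` M)"
    unfolding d_def infdist_notempty[OF \<open>M \<noteq> {}\<close>] dist_norm
    by (rule closure_contains_Inf) (use \<open>M \<noteq> {}\<close> in \<open>auto intro: bdd_belowI[of _ 0]\<close>)
  then obtain ds where ds: "\<And>n. ds n \<in> (\<lambda>m. norm (x - m)) ` M" and "ds \<longlonglongrightarrow> d"
    unfolding closure_sequential by blast
  then have "\<forall>n. \<exists>m. m \<in> M \<and> ds n = norm (x - m)"
    by blast
  then obtain ms where ms: "\<And>n. ms n \<in> M" and ds_eq: "\<And>n. ds n = norm (x - ms n)"
    unfolding choice_iff by blast
  have lim: "(\<lambda>n. norm (x - ms n)) \<longlonglongrightarrow> d"
    using \<open>ds \<longlonglongrightarrow> d\<close> by (simp add: ds_eq[symmetric])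
  have "Cauchy ms"
    using midpoint ms d_le lim by (rule Cauchy_minimizing_sequence)
  then obtain m where "ms \<longlonglongrightarrow> m"
    using Cauchy_convergent_iff convergent_def by blast
  then have "m \<in> M"
    using \<open>closed M\<close> ms closed_sequential_limits by blast
  moreover have "(\<lambda>n. norm (x - ms n)) \<longlonglongrightarrow> norm (x - m)"
    by (intro tendsto_intros \<open>ms \<longlonglongrightarrow> m\<close>)
  then have "norm (x - m) = d"
    using lim by (rule LIMSEQ_unique)
  ultimately show ?thesis
    using d_le by auto
qed

lemma nearest_point_orthogonal:
  fixes M :: "'a::complex_hilbert set"
  assumes add: "\<And>m m'. m \<in> M \<Longrightarrow> m' \<in> M \<Longrightarrow> m + m' \<in> M"
    and scale: "\<And>c m. m \<in> M \<Longrightarrow> scaleC c m \<in> M"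
    and "m \<in> M" and nearest: "\<And>m'. m' \<in> M \<Longrightarrow> norm (x - m) \<le> norm (x - m')"
    and "m' \<in> M"
  shows "cinner (x - m) m' = 0"
proof (cases "m' = 0")
  case False
  define c where "c = cinner (x - m) m' / of_real (norm m' ^ 2)"
  have "norm (x - m) \<le> norm ((x - m) - scaleC c m')"
    using nearest[OF add[OF \<open>m \<in> M\<close> scale[OF \<open>m' \<in> M\<close>]]] by (simp add: algebra_simps)
  then have "norm (x - m) ^ 2 \<le> norm ((x - m) - scaleC c m') ^ 2"
    by (simp add: power_mono)
  then have "norm (x - m) ^ 2 \<le> norm (x - m) ^ 2 - (cmod (cinner (x - m) m')) ^ 2 / norm m' ^ 2"
    by (simp only: c_def norm_diff_projection_sq[OF False])
  then show ?thesis
    using False by (simp add: divide_le_0_iff)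
qed simp

lemma eq_cinner_of_orthogonal_kernel:
  fixes f :: "'a::complex_hilbert \<Rightarrow> complex"
  assumes add: "\<And>x y. f (x + y) = f x + f y" and hom: "\<And>a x. f (scaleC a x) = a * f x"
    and "f w \<noteq> 0" and orth: "\<And>m. f m = 0 \<Longrightarrow> cinner w m = 0"
  shows "f x = cinner x (scaleC (cnj (f w) / cinner w w) w)"
proof -
  have "w \<noteq> 0"
    using \<open>f w \<noteq> 0\<close> hom[of 0 0] by auto
  then have "cinner w w \<noteq> 0"
    by (simp add: cinner_self_eq_0)
  have fdiff: "f (x - y) = f x - f y" for x y
    using add[of "x - y" y] by simp
  \<comment> \<open>\<open>f(w) x - f(x) w\<close> lies in the kernel, hence is orthogonal to \<open>w\<close>\<close>
  have "cinner (scaleC (f w) x - scaleC (f x) w) w = 0"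
    using orth[of "scaleC (f w) x - scaleC (f x) w"]
    by (metis cinner_commute complex_cnj_zero fdiff hom mult.commute right_minus_eq)
  then have "f w * cinner x w = f x * cinner w w"
    by (simp add: cinner_diff_left cinner_scaleC_left)
  then show ?thesis
    using \<open>cinner w w \<noteq> 0\<close> by (simp add: cinner_scaleC_right cinner_self_eq_norm_sq field_simps)
qed

lemma riesz_representation:
  fixes f :: "'a::complex_hilbert \<Rightarrow> complex"
  assumes add: "\<And>x y. f (x + y) = f x + f y" and hom: "\<And>a x. f (scaleC a x) = a * f x"
    and bound: "\<And>x. cmod (f x) \<le> K * norm x"
  shows "\<exists>z. \<forall>x. f x = cinner x z"
proof (cases "\<forall>x. f x = 0")
  case True
  then show ?thesis
    by (intro exI[of _ 0]) simp
next
  case False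
  then obtain x0 where "f x0 \<noteq> 0"
    by auto
  have "bounded_linear f"
    by (rule bounded_linear_intro[of _ K])
      (auto simp: add hom scaleR_scaleC scaleR_conv_of_real bound mult.commute)
  then have "closed {m. f m = 0}"
    by (intro closed_Collect_eq linear_continuous_on continuous_on_const)
  moreover have "f 0 = 0"
    using hom[of 0 0] by simp
  ultimately obtain m where m: "f m = 0"
    and nearest: "\<And>m'. f m' = 0 \<Longrightarrow> norm (x0 - m) \<le> norm (x0 - m')"
    using exists_nearest_point[of "{m. f m = 0}" x0] by (auto simp: add hom scaleR_scaleC)
  have "f (x0 - m) \<noteq> 0"
    using \<open>f x0 \<noteq> 0\<close> m add[of "x0 - m" m] by simp
  moreover have "cinner (x0 - m) m' = 0" if "f m' = 0" for m'
    using m nearest that by (intro nearest_point_orthogonal[of "{m. f m = 0}"]) (auto simp: add hom)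
  ultimately have "f x = cinner x (scaleC (cnj (f (x0 - m)) / cinner (x0 - m) (x0 - m)) (x0 - m))" for x
    by (rule eq_cinner_of_orthogonal_kernel[OF add hom])
  then show ?thesis
    by blast
qed

section \<open>Bounded operators and adjoints\<close>

lemma bounded_op_add: "bounded_op A \<Longrightarrow> A (x + y) = A x + A y"
  by (simp add: bounded_op_def)

lemma bounded_op_diff: "bounded_op A \<Longrightarrow> A (x - y) = A x - A y"
  using bounded_op_add[of A "x - y" y] by simp

lemma bounded_op_scaleC: "bounded_op A \<Longrightarrow> A (scaleC a x) = scaleC a (A x)"
  by (simp add: bounded_op_def)

lemma bounded_op_imp_bounded_linear:
  assumes "bounded_op A"
  shows "bounded_linear A"
proof -
  obtain K where "\<And>x. norm (A x) \<le> norm x * K"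
    using assms by (auto simp: bounded_op_def)
  then show ?thesis
    by (intro bounded_linear_intro[of _ K])
      (auto simp: bounded_op_add[OF assms] bounded_op_scaleC[OF assms] scaleR_scaleC)
qed

lemma cinner_adj:
  assumes "bounded_op (A :: 'a::complex_hilbert \<Rightarrow> 'a)"
  shows "cinner (A x) y = cinner x (adj A y)"
proof -
  have "\<exists>z. \<forall>x. cinner (A x) y = cinner x z" for y
  proof (rule riesz_representation)
    show "cmod (cinner (A x) y) \<le> onorm A * norm y * norm x" for x
      using cmod_cinner_le[of "A x" y]
        mult_right_mono[OF onorm[OF bounded_op_imp_bounded_linear[OF assms], of x] norm_ge_zero[of y]]
      by (simp add: mult_ac)
  qed (simp_all add: bounded_op_add[OF assms] bounded_op_scaleC[OF assms]
      cinner_add_left cinner_scaleC_left)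
  then have "\<exists>B. \<forall>x y. cinner (A x) y = cinner x (B y)"
    by metis
  then show ?thesis
    unfolding adj_def
    by (rule someI_ex[where P = "\<lambda>B. \<forall>x y. cinner (A x) y = cinner x (B y)", THEN spec, THEN spec])
qed

lemma norm_adjoint_le:
  fixes X Y :: "'a::complex_hilbert \<Rightarrow> 'a"
  assumes adjoint: "\<And>x y. cinner (X x) y = cinner x (Y y)"
    and bound: "\<And>x. norm (X x) \<le> k * norm x" and "0 \<le> k"
  shows "norm (Y y) \<le> k * norm y"
proof -
  have "norm (Y y) ^ 2 = Re (cinner (X (Y y)) y)"
    by (simp add: adjoint cinner_self_eq_norm_sq)
  also have "\<dots> \<le> norm (X (Y y)) * norm y"
    using complex_Re_le_cmod cmod_cinner_le order_trans by blast
  also have "\<dots> \<le> k * norm (Y y) * norm y"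
    by (rule mult_right_mono[OF bound]) simp
  finally show ?thesis
    using \<open>0 \<le> k\<close> by (cases "Y y = 0") (auto simp: power2_eq_square mult_ac)
qed

lemma bounded_op_adj:
  assumes "bounded_op (A :: 'a::complex_hilbert \<Rightarrow> 'a)"
  shows "bounded_op (adj A)"
  unfolding bounded_op_def
proof (intro conjI allI)
  show "adj A (y + y') = adj A y + adj A y'" for y y'
    by (rule cinner_right_ext[symmetric]) (simp add: cinner_adj[OF assms, symmetric] cinner_add_right)
  show "adj A (scaleC c y) = scaleC c (adj A y)" for c y
    by (rule cinner_right_ext[symmetric]) (simp add: cinner_adj[OF assms, symmetric] cinner_scaleC_right)
  have "norm (adj A y) \<le> onorm A * norm y" for y
    using cinner_adj[OF assms] onorm[OF bounded_op_imp_bounded_linear[OF assms]]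
      onorm_pos_le[OF bounded_op_imp_bounded_linear[OF assms]]
    by (rule norm_adjoint_le)
  then show "\<exists>K. \<forall>y. norm (adj A y) \<le> norm y * K"
    by (metis mult.commute)
qed

section \<open>Off-diagonal operator matrices\<close>

lemma inner2_offdiag:
  assumes "bounded_op C"
  shows "inner2 (opmatrix (\<lambda>_. 0) B C (\<lambda>_. 0) (u, v)) (u, v)
         = cinner (B v) u + cnj (cinner (adj C v) u)"
  by (simp add: opmatrix_def inner2_def cinner_adj[OF assms] cinner_commute[of u])

lemma cmod_inner2_offdiag_le_numrad2:
  fixes B C :: "'a::complex_hilbert \<Rightarrow> 'a"
  assumes "bounded_op B" "bounded_op C" and unit: "norm u ^ 2 + norm v ^ 2 = 1"
  shows "cmod (inner2 (opmatrix (\<lambda>_. 0) B C (\<lambda>_. 0) (u, v)) (u, v))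
         \<le> numrad2 (opmatrix (\<lambda>_. 0) B C (\<lambda>_. 0))"
proof -
  let ?T = "opmatrix (\<lambda>_. 0) B C (\<lambda>_. 0)"
  have bounded: "cmod (inner2 (?T (x, y)) (x, y)) \<le> onorm B + onorm (adj C)"
    if "norm x ^ 2 + norm y ^ 2 = 1" for x y :: 'a
  proof -
    have "norm x ^ 2 \<le> 1" "norm y ^ 2 \<le> 1"
      using that zero_le_power2[of "norm x"] zero_le_power2[of "norm y"] by linarith+
    then have "norm x \<le> 1" "norm y \<le> 1"
      by (simp_all add: abs_square_le_1)
    have "cmod (cinner (A y) x) \<le> onorm A" if "bounded_linear A" for A
    proof -
      have "cmod (cinner (A y) x) \<le> onorm A * norm y * norm x"
        using cmod_cinner_le[of "A y" x] mult_right_mono[OF onorm[OF that, of y] norm_ge_zero[of x]]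
        by simp
      also have "\<dots> \<le> onorm A"
        using \<open>norm x \<le> 1\<close> \<open>norm y \<le> 1\<close> onorm_pos_le[OF that]
        by (simp add: mult_left_le mult_le_one mult.assoc)
      finally show ?thesis .
    qed
    then have "cmod (cinner (B y) x) + cmod (cinner (adj C y) x) \<le> onorm B + onorm (adj C)"
      using assms by (intro add_mono) (simp_all add: bounded_op_imp_bounded_linear bounded_op_adj)
    moreover have "cmod (inner2 (?T (x, y)) (x, y)) \<le> cmod (cinner (B y) x) + cmod (cinner (adj C y) x)"
      unfolding inner2_offdiag[OF assms(2)] by (metis complex_mod_cnj norm_triangle_ineq)
    ultimately show ?thesis
      by linarith
  qed
  have "bdd_above ((\<lambda>p. cmod (inner2 (?T p) p)) ` {p. norm2 p = 1})"
    by (rule bdd_aboveI2[of _ _ "onorm B + onorm (adj C)"]) (auto simp: norm2_def bounded)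
  then show ?thesis
    unfolding numrad2_def by (intro cSUP_upper) (simp_all add: norm2_def unit)
qed

lemma norm_le_of_Re_cinner_le:
  fixes S :: "'a::complex_hilbert \<Rightarrow> 'a"
  assumes "bounded_linear S"
    and Re_le: "\<And>u v. norm u ^ 2 + norm v ^ 2 = 1 \<Longrightarrow> Re (cinner (S v) u) \<le> w"
  shows "norm (S v) \<le> 2 * w * norm v"
proof (cases "v = 0")
  case True
  then show ?thesis
    using linear_0[OF bounded_linear.linear[OF assms(1)]] by simp
next
  case False
  have "0 \<le> w"
    using Re_le[of 0 "scaleR (1 / norm v) v"] False by simp
  show ?thesis
  proof (cases "S v = 0")
    case True
    then show ?thesis
      using \<open>0 \<le> w\<close> by simp
  next
    case Sv: False
    \<comment> \<open>test against the unit vector \<open>(S v / (\<surd>2 \<parallel>S v\<parallel>), v / (\<surd>2 \<parallel>v\<parallel>))\<close>\<close>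
    define r where "r = 1 / (sqrt 2 * norm v)"
    define s where "s = 1 / (sqrt 2 * norm (S v))"
    have "norm (scaleR s (S v)) ^ 2 + norm (scaleR r v) ^ 2 = 1"
      using False Sv by (simp add: r_def s_def power_mult_distrib power_divide)
    then have "Re (cinner (S (scaleR r v)) (scaleR s (S v))) \<le> w"
      by (rule Re_le)
    moreover have "Re (cinner (S (scaleR r v)) (scaleR s (S v))) = r * s * norm (S v) ^ 2"
      by (simp add: linear_scale[OF bounded_linear.linear[OF assms(1)]] cinner_scaleR_left
          cinner_scaleR_right cinner_self_eq_norm_sq)
    moreover have "r * s * norm (S v) ^ 2 = norm (S v) / (2 * norm v)"
      using Sv by (simp add: r_def s_def power2_eq_square)
    ultimately have "norm (S v) / (2 * norm v) \<le> w"
      by linarith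
    then show ?thesis
      using False by (simp add: field_simps)
  qed
qed

lemma onorm_offdiag_parts_le_numrad2:
  fixes B C :: "'a::complex_hilbert \<Rightarrow> 'a"
  assumes "bounded_op B" "bounded_op C"
  shows "onorm (\<lambda>x. B x + adj C x) \<le> 2 * \<bar>numrad2 (opmatrix (\<lambda>_. 0) B C (\<lambda>_. 0))\<bar>"
    and "onorm (\<lambda>x. B x - adj C x) \<le> 2 * \<bar>numrad2 (opmatrix (\<lambda>_. 0) B C (\<lambda>_. 0))\<bar>"
proof -
  let ?T = "opmatrix (\<lambda>_. 0) B C (\<lambda>_. 0)"
  let ?w = "numrad2 ?T"
  have lin: "bounded_linear B" "bounded_linear (adj C)"
    using assms by (simp_all add: bounded_op_imp_bounded_linear bounded_op_adj)
  \<comment> \<open>\<open>\<bar>w\<bar>\<close> rather than \<open>w\<close>: on the zero space \<open>numrad2\<close> is a supremum of the empty set\<close>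
  have onorm_le_2w: "onorm S \<le> 2 * \<bar>?w\<bar>"
    if "bounded_linear S" "\<And>u v. norm u ^ 2 + norm v ^ 2 = 1 \<Longrightarrow> Re (cinner (S v) u) \<le> ?w" for S :: "'a \<Rightarrow> 'a"
  proof (rule onorm_bound)
    fix v
    have "norm (S v) \<le> 2 * ?w * norm v"
      using that by (rule norm_le_of_Re_cinner_le)
    also have "\<dots> \<le> 2 * \<bar>?w\<bar> * norm v"
      by (intro mult_right_mono) simp_all
    finally show "norm (S v) \<le> 2 * \<bar>?w\<bar> * norm v" .
  qed simp
  have form_le: "cmod (inner2 (?T (u, v)) (u, v)) \<le> ?w" if "norm u ^ 2 + norm v ^ 2 = 1" for u v
    using assms that by (rule cmod_inner2_offdiag_le_numrad2)
  show "onorm (\<lambda>x. B x + adj C x) \<le> 2 * \<bar>?w\<bar>"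
  proof (rule onorm_le_2w)
    fix u v :: 'a
    assume "norm u ^ 2 + norm v ^ 2 = 1"
    then have "Re (inner2 (?T (u, v)) (u, v)) \<le> ?w"
      using complex_Re_le_cmod[of "inner2 (?T (u, v)) (u, v)"] form_le[of u v] by linarith
    then show "Re (cinner (B v + adj C v) u) \<le> ?w"
      by (simp add: inner2_offdiag[OF assms(2)] cinner_add_left)
  qed (use lin in \<open>rule bounded_linear_add\<close>)
  \<comment> \<open>the imaginary part of the form is the real part of \<open>\<langle>(B - C') v, u\<rangle>\<close> after rotating \<open>u\<close> by \<open>-\<i>\<close>\<close>
  show "onorm (\<lambda>x. B x - adj C x) \<le> 2 * \<bar>?w\<bar>"
  proof (rule onorm_le_2w)
    fix u v :: 'a
    assume "norm u ^ 2 + norm v ^ 2 = 1"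
    then have "norm (scaleC (- \<i>) u) ^ 2 + norm v ^ 2 = 1"
      by (simp add: norm_scaleC)
    then have "Im (inner2 (?T (scaleC (- \<i>) u, v)) (scaleC (- \<i>) u, v)) \<le> ?w"
      using abs_Im_le_cmod[of "inner2 (?T (scaleC (- \<i>) u, v)) (scaleC (- \<i>) u, v)"]
        form_le[of "scaleC (- \<i>) u" v] by linarith
    then show "Re (cinner (B v - adj C v) u) \<le> ?w"
      by (simp add: inner2_offdiag[OF assms(2)] cinner_scaleC_right cinner_diff_left)
  qed (use lin in \<open>rule bounded_linear_sub\<close>)
qed

lemma onorm_le_half_sum_sq:
  fixes P :: "'a::real_normed_vector \<Rightarrow> 'b::real_normed_vector"
  assumes P: "\<And>x. P x + P x = U (S x) + V (R x)"
    and S: "\<And>x. norm (S x) \<le> a * norm x" and U: "\<And>x. norm (U x) \<le> a * norm x"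
    and R: "\<And>x. norm (R x) \<le> b * norm x" and V: "\<And>x. norm (V x) \<le> b * norm x"
    and "0 \<le> a" "0 \<le> b"
  shows "onorm P \<le> (a ^ 2 + b ^ 2) / 2"
proof (rule onorm_bound)
  fix x
  have "2 * norm (P x) = norm (U (S x) + V (R x))"
    by (simp flip: P scaleR_2)
  also have "\<dots> \<le> a * norm (S x) + b * norm (R x)"
    using norm_triangle_ineq U V add_mono order_trans by metis
  also have "\<dots> \<le> a * (a * norm x) + b * (b * norm x)"
    using \<open>0 \<le> a\<close> \<open>0 \<le> b\<close> by (intro add_mono mult_left_mono S R)
  finally show "norm (P x) \<le> (a ^ 2 + b ^ 2) / 2 * norm x"
    by (simp add: power2_eq_square field_simps)
qed simp

lemma onorm_gram_sums_le:
  fixes B C :: "'a::complex_hilbert \<Rightarrow> 'a"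
  assumes "bounded_op B" "bounded_op C"
  defines "a \<equiv> onorm (\<lambda>x. B x + adj C x)" and "b \<equiv> onorm (\<lambda>x. B x - adj C x)"
  shows "onorm (\<lambda>x. adj B (B x) + C (adj C x)) \<le> (a ^ 2 + b ^ 2) / 2"
    and "onorm (\<lambda>x. B (adj B x) + adj C (C x)) \<le> (a ^ 2 + b ^ 2) / 2"
proof -
  note B = assms(1) and C = assms(2)
  have lin: "bounded_linear (\<lambda>x. B x + adj C x)" "bounded_linear (\<lambda>x. B x - adj C x)"
    using B C by (simp_all add: bounded_linear_add bounded_linear_sub bounded_op_imp_bounded_linear
        bounded_op_adj)
  have a: "norm (B x + adj C x) \<le> a * norm x" and b: "norm (B x - adj C x) \<le> b * norm x" for x
    using onorm[OF lin(1)] onorm[OF lin(2)] by (simp_all add: a_def b_def)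
  have "0 \<le> a" "0 \<le> b"
    using onorm_pos_le[OF lin(1)] onorm_pos_le[OF lin(2)] by (simp_all add: a_def b_def)
  have adj_C: "cinner (adj C x) y = cinner x (C y)" for x y
    by (metis cinner_adj[OF C] cinner_commute)
  have adjS: "norm (adj B y + C y) \<le> a * norm y" for y
    using _ a \<open>0 \<le> a\<close> by (rule norm_adjoint_le)
      (simp add: cinner_add_left cinner_add_right cinner_adj[OF B] adj_C)
  have adjR: "norm (adj B y - C y) \<le> b * norm y" for y
    using _ b \<open>0 \<le> b\<close> by (rule norm_adjoint_le)
      (simp add: cinner_diff_left cinner_diff_right cinner_adj[OF B] adj_C)
  have adj_ops: "bounded_op (adj B)" "bounded_op (adj C)"
    using B C by (simp_all add: bounded_op_adj)
  \<comment> \<open>\<open>2 (B'B + CC') = S'S + R'R\<close> for \<open>S = B + C'\<close>, \<open>R = B - C'\<close>, and dually\<close>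
  show "onorm (\<lambda>x. adj B (B x) + C (adj C x)) \<le> (a ^ 2 + b ^ 2) / 2"
    by (rule onorm_le_half_sum_sq[where U = "\<lambda>y. adj B y + C y" and S = "\<lambda>x. B x + adj C x"
          and V = "\<lambda>y. adj B y - C y" and R = "\<lambda>x. B x - adj C x", OF _ a adjS b adjR \<open>0 \<le> a\<close> \<open>0 \<le> b\<close>])
      (simp add: adj_ops C bounded_op_add bounded_op_diff algebra_simps)
  show "onorm (\<lambda>x. B (adj B x) + adj C (C x)) \<le> (a ^ 2 + b ^ 2) / 2"
    by (rule onorm_le_half_sum_sq[where U = "\<lambda>x. B x + adj C x" and S = "\<lambda>y. adj B y + C y"
          and V = "\<lambda>x. B x - adj C x" and R = "\<lambda>y. adj B y - C y", OF _ adjS a adjR b \<open>0 \<le> a\<close> \<open>0 \<le> b\<close>])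
      (simp add: adj_ops B bounded_op_add bounded_op_diff algebra_simps)
qed

lemma sqrt_sum_power4_le:
  fixes a b c :: real
  assumes "0 \<le> a" "0 \<le> b" "a \<le> c" "b \<le> c"
  shows "sqrt (a ^ 4 + b ^ 4) \<le> sqrt 2 * c ^ 2"
proof -
  have "a ^ 4 + b ^ 4 \<le> (sqrt 2 * c ^ 2) ^ 2"
    using power_mono[OF \<open>a \<le> c\<close> \<open>0 \<le> a\<close>, of 4] power_mono[OF \<open>b \<le> c\<close> \<open>0 \<le> b\<close>, of 4]
    by (simp add: power_mult_distrib flip: power_mult)
  then show ?thesis
    using real_sqrt_le_mono by fastforce
qed

lemma sum_sq_le_sqrt_sum_power4:
  fixes a b :: real
  shows "a ^ 2 + b ^ 2 \<le> sqrt 2 * sqrt (a ^ 4 + b ^ 4)"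
proof -
  have "(a ^ 2 + b ^ 2) ^ 2 \<le> 2 * (a ^ 4 + b ^ 4)"
    using zero_le_power2[of "a ^ 2 - b ^ 2"] by (simp add: power2_eq_square power4_eq_xxxx algebra_simps)
  then show ?thesis
    by (metis real_sqrt_le_mono real_sqrt_mult real_sqrt_unique zero_le_power2 add_nonneg_nonneg)
qed

theorem mainTheorem8:
  fixes B C :: "'a::complex_hilbert \<Rightarrow> 'a"
  assumes "bounded_op B" and "bounded_op C"
  shows "numrad2 (opmatrix (\<lambda>_. 0) B C (\<lambda>_. 0)) ^ 2
           \<ge> 1 / (4 * sqrt 2) *
             sqrt (onorm (\<lambda>x. B x + adj C x) ^ 4 + onorm (\<lambda>x. B x - adj C x) ^ 4)
       \<and> 1 / (4 * sqrt 2) *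
             sqrt (onorm (\<lambda>x. B x + adj C x) ^ 4 + onorm (\<lambda>x. B x - adj C x) ^ 4)
           \<ge> 1 / 4 * max (onorm (\<lambda>x. adj B (B x) + C (adj C x)))
                         (onorm (\<lambda>x. B (adj B x) + adj C (C x)))"
proof
  let ?w = "numrad2 (opmatrix (\<lambda>_. 0) B C (\<lambda>_. 0))"
  let ?a = "onorm (\<lambda>x. B x + adj C x)" and ?b = "onorm (\<lambda>x. B x - adj C x)"
  have "0 \<le> ?a" "0 \<le> ?b"
    using assms by (simp_all add: onorm_pos_le bounded_linear_add bounded_linear_sub
        bounded_op_imp_bounded_linear bounded_op_adj)
  then have "sqrt (?a ^ 4 + ?b ^ 4) \<le> sqrt 2 * (2 * \<bar>?w\<bar>) ^ 2"
    using onorm_offdiag_parts_le_numrad2[OF assms] by (intro sqrt_sum_power4_le)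
  then show "?w ^ 2 \<ge> 1 / (4 * sqrt 2) * sqrt (?a ^ 4 + ?b ^ 4)"
    by (simp add: field_simps power_mult_distrib)
  have "1 / 4 * max (onorm (\<lambda>x. adj B (B x) + C (adj C x))) (onorm (\<lambda>x. B (adj B x) + adj C (C x)))
      \<le> 1 / 4 * (sqrt 2 * sqrt (?a ^ 4 + ?b ^ 4) / 2)"
    using onorm_gram_sums_le[OF assms] sum_sq_le_sqrt_sum_power4[of ?a ?b] by simp
  also have "\<dots> = 1 / (4 * sqrt 2) * sqrt (?a ^ 4 + ?b ^ 4)"
    by (simp add: field_simps)
  finally show "1 / (4 * sqrt 2) * sqrt (?a ^ 4 + ?b ^ 4)
      \<ge> 1 / 4 * max (onorm (\<lambda>x. adj B (B x) + C (adj C x))) (onorm (\<lambda>x. B (adj B x) + adj C (C x)))" .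
qed

end
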